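(* Let $k\ge2$, $n\ge1$ be integers and let $K_1,\dots,K_k$ be unconditional convex bodies in $\mathbb{R}^n$ with nonempty interior and radial functions $r_i=r_{K_i}$. Assume that for all $x_1,\dots,x_k\in S^{n-1}$, writing $x_i=((x_i)_1,\dots,(x_i)_n)$, $$\prod_{i=1}^kr_i(x_i)\le\frac{1}{\Bigl(\sum_{j=1}^n\bigl(|(x_1)_j|^{1/k}\cdots|(x_k)_j|^{1/k}\bigr)^2\Bigr)^{k/2}} .$$ Then $\prod_{i=1}^k\mathrm{vol}_n(K_i)\le(\mathrm{vol}_n(B_2^n))^k$.
   Context: $K$ is unconditional if it is invariant under all coordinate sign changes. The radial function of $K$ is $r_K(x)=\max\{\lambda\ge0:\lambda x\in K\}$. $S^{n-1}$ is the Euclidean unit sphere, $B_2^n$ the Euclidean unit ball, $\mathrm{vol}_n$ Lebesgue measure. The right-hand side is interpreted as $+\infty$ when its denominator vanishes. *)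

theory Defs
  imports "HOL-Analysis.Analysis"
begin

definition convex_body :: "('a::euclidean_space) set \<Rightarrow> bool" where
  "convex_body K \<longleftrightarrow> compact K \<and> convex K"

definition unconditional :: "(real ^ 'n) set \<Rightarrow> bool" where
  "unconditional K \<longleftrightarrow>
     (\<forall>\<epsilon> :: 'n \<Rightarrow> real. (\<forall>j. \<epsilon> j = 1 \<or> \<epsilon> j = -1) \<longrightarrow>
        (\<forall>x\<in>K. (\<chi> j. \<epsilon> j * x $ j) \<in> K))"

definition radial_fun :: "('a::real_vector) set \<Rightarrow> 'a \<Rightarrow> real" where
  "radial_fun K x = Sup {t::real. t \<ge> 0 \<and> t *\<^sub>R x \<in> K}"

end

theory Submission
  imports Defs
begin

text \<open>
  Write \<open>x\<^sub>i = \<bar>x\<^sub>i\<bar> u\<^sub>i\<close> with \<open>u\<^sub>i\<close> on the sphere. Since \<open>\<bar>x\<^sub>i\<bar> \<le> r\<^sub>i(u\<^sub>i)\<close> for \<open>x\<^sub>i \<in> K\<^sub>i\<close> and the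
  coordinatewise geometric mean \<open>(\<Prod>\<^sub>i \<bar>x\<^sub>i\<^sub>j\<bar>\<^bsup>1/k\<^esup>)\<^sub>j\<close> is homogeneous, the hypothesis says that this
  geometric mean, with arbitrary signs, lies in the unit ball whenever every \<open>x\<^sub>i \<in> K\<^sub>i\<close>. The theorem
  is therefore the multiplicative Prekopa-Leindler inequality \<open>\<Prod>\<^sub>i \<integral>f\<^sub>i \<le> (\<integral>h)\<^sup>k\<close> for the
  indicators of the \<open>K\<^sub>i\<close> and of the ball.

  On the line, the Brunn-Minkowski inequality \<open>\<bar>A\<^sub>1 + \<dots> + A\<^sub>k\<bar> \<ge> \<Sum>\<^sub>i \<bar>A\<^sub>i\<bar>\<close> applied to superlevel
  sets gives the version with arithmetic means; the substitution \<open>x = e\<^sup>s\<close> turns it into the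
  version with geometric means on the half-line, and folding \<open>f\<^sub>i(x)\<close> and \<open>f\<^sub>i(-x)\<close> together
  extends it to the whole line. Fubini then extends it one coordinate at a time to \<open>\<real>\<^sup>n\<close>.
\<close>

section \<open>The Brunn-Minkowski inequality on the real line\<close>

lemma emeasure_lborel_affine_image:
  fixes A :: "real set" and c t :: real
  assumes A: "A \<in> sets borel" and c: "c > 0"
  shows "emeasure lborel ((\<lambda>x. t + c * x) ` A) = c * emeasure lborel A"
proof -
  have img: "(\<lambda>x. t + c * x) ` A = (\<lambda>y. (y - t) / c) -` A"
    using c by (force simp: field_simps image_iff)
  have S: "(\<lambda>x. t + c * x) ` A \<in> sets borel"
    unfolding img by (rule measurable_sets_borel[OF _ A]) measurable
  have ind: "indicator ((\<lambda>x. t + c * x) ` A) (t + c * x) = (indicator A x :: ennreal)" for x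
    using c by (auto simp: img split: split_indicator)
  have "emeasure lborel ((\<lambda>x. t + c * x) ` A) = (\<integral>\<^sup>+x. indicator ((\<lambda>x. t + c * x) ` A) x \<partial>lborel)"
    using S by simp
  also have "\<dots> = c * (\<integral>\<^sup>+x. indicator ((\<lambda>x. t + c * x) ` A) (t + c * x) \<partial>lborel)"
    using S c by (subst nn_integral_real_affine[where c = c and t = t]) auto
  also have "\<dots> = c * emeasure lborel A"
    using A by (simp add: ind)
  finally show ?thesis .
qed

lemma emeasure_lborel_elt_set_plus:
  fixes A :: "real set"
  assumes "A \<in> sets borel"
  shows "emeasure lborel (a +o A) = emeasure lborel A"
  using emeasure_lborel_affine_image[OF assms, of 1 a] by (simp add: elt_set_plus_def image_def)

lemma emeasure_lborel_elt_set_times: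
  fixes A :: "real set"
  assumes "A \<in> sets borel" "c > 0"
  shows "emeasure lborel (c *o A) = c * emeasure lborel A"
  using emeasure_lborel_affine_image[OF assms, of 0] by (simp add: elt_set_times_def image_def)

lemma elt_set_times_borel:
  fixes A :: "real set"
  assumes "A \<in> sets borel" "c \<noteq> 0"
  shows "c *o A \<in> sets borel"
proof -
  have "c *o A = (\<lambda>y. y / c) -` A"
    using assms(2) by (force simp: elt_set_times_def)
  also have "\<dots> \<in> sets borel"
    by (rule measurable_sets_borel[OF _ assms(1)]) measurable
  finally show ?thesis .
qed

lemma compact_set_plus:
  fixes A B :: "'a::real_normed_vector set"
  assumes "compact A" "compact B"
  shows "compact (A + B)"
proof -
  have "A + B = {x + y | x y. x \<in> A \<and> y \<in> B}"
    by (auto simp: set_plus_def)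
  then show ?thesis
    using compact_sums[OF assms] by simp
qed

lemma elt_set_plus_eq_image: "a +o A = (\<lambda>x. a + x) ` A"
  by (auto simp: elt_set_plus_def)

lemma brunn_minkowski_real:
  fixes A B :: "real set"
  assumes A: "compact A" "A \<noteq> {}" and B: "compact B" "B \<noteq> {}"
  shows "emeasure lborel A + emeasure lborel B \<le> emeasure lborel (A + B)"
proof -
  obtain a where a: "a \<in> A" "\<And>x. x \<in> A \<Longrightarrow> x \<le> a" using compact_attains_sup[OF A] by blast
  obtain b where b: "b \<in> B" "\<And>y. y \<in> B \<Longrightarrow> b \<le> y" using compact_attains_inf[OF B] by blast
  have [measurable]: "A \<in> sets borel" "B \<in> sets borel" "A + B \<in> sets borel"
    using A B by (auto intro: borel_compact compact_set_plus)
  have bA: "b +o A \<in> sets borel" "b +o A \<subseteq> {..a + b}"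
    using A a by (auto simp: elt_set_plus_eq_image intro!: borel_compact compact_translation)
  have "a +o B \<in> sets borel"
    using B by (auto intro!: borel_compact compact_translation simp: elt_set_plus_eq_image)
  then have aB: "a +o B \<inter> {a + b<..} \<in> sets borel"
    by simp
  have "emeasure lborel (a +o B) \<le> emeasure lborel (a +o B \<inter> {a + b<..} \<union> {a + b})"
    using b aB by (intro emeasure_mono) (force simp: elt_set_plus_def)+
  also have "\<dots> \<le> emeasure lborel (a +o B \<inter> {a + b<..})"
    using aB emeasure_subadditive[of "a +o B \<inter> {a + b<..}" lborel "{a + b}"] by simp
  finally have "emeasure lborel A + emeasure lborel B
      \<le> emeasure lborel (b +o A) + emeasure lborel (a +o B \<inter> {a + b<..})"
    by (simp add: emeasure_lborel_elt_set_plus)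
  also have "\<dots> = emeasure lborel (b +o A \<union> (a +o B \<inter> {a + b<..}))"
    using bA aB by (intro plus_emeasure) auto
  also have "\<dots> \<le> emeasure lborel (A + B)"
  proof (rule emeasure_mono)
    show "b +o A \<union> (a +o B \<inter> {a + b<..}) \<subseteq> A + B"
      using a(1) b(1) by (auto simp: elt_set_plus_def) (metis add.commute set_plus_intro)
  qed simp
  finally show ?thesis .
qed

lemma compact_sum_sets:
  fixes A :: "'i \<Rightarrow> 'a::real_normed_vector set"
  assumes "finite I" "\<And>i. i \<in> I \<Longrightarrow> compact (A i)"
  shows "compact (\<Sum>i\<in>I. A i)"
  using assms by (induction I rule: finite_induct) (auto intro: compact_set_plus)

lemma sum_sets_nonempty:
  fixes A :: "'i \<Rightarrow> 'a::comm_monoid_add set"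
  assumes "finite I" "\<And>i. i \<in> I \<Longrightarrow> A i \<noteq> {}"
  shows "(\<Sum>i\<in>I. A i) \<noteq> {}"
  using assms
proof (induction I rule: finite_induct)
  case (insert i I)
  then obtain a b where "a \<in> A i" "b \<in> (\<Sum>i\<in>I. A i)" by blast
  then have "a + b \<in> (\<Sum>i\<in>insert i I. A i)" using insert.hyps by (simp add: set_plus_intro)
  then show ?case by blast
qed simp

lemma brunn_minkowski_real_sum:
  fixes A :: "nat \<Rightarrow> real set"
  assumes "\<And>i. i < k \<Longrightarrow> compact (A i) \<and> A i \<noteq> {}"
  shows "(\<Sum>i<k. emeasure lborel (A i)) \<le> emeasure lborel (\<Sum>i<k. A i)"
  using assms
proof (induction k)
  case (Suc k)
  have "(\<Sum>i<Suc k. emeasure lborel (A i)) \<le> emeasure lborel (\<Sum>i<k. A i) + emeasure lborel (A k)"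
    using Suc by (simp add: add_right_mono)
  also have "\<dots> \<le> emeasure lborel ((\<Sum>i<k. A i) + A k)"
    using Suc.prems by (intro brunn_minkowski_real compact_sum_sets sum_sets_nonempty) auto
  finally show ?case by simp
qed simp

lemma emeasure_lborel_inner_compact:
  fixes L :: "'a::euclidean_space set" and e :: real
  assumes L: "L \<in> sets borel" "bounded L" "L \<noteq> {}" and e: "e > 0"
  obtains T where "compact T" "T \<noteq> {}" "T \<subseteq> L" "emeasure lborel L \<le> emeasure lborel T + e"
proof -
  obtain T0 where T0: "closed T0" "T0 \<subseteq> L" "emeasure lebesgue (L - T0) < e"
    using sets_lebesgue_inner_closed[OF _ e, of L] L(1) by (metis sets_completionI_sets sets_lborel)
  obtain p where p: "p \<in> L" using L(3) by blast
  define T where "T = insert p T0"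
  have T: "compact T" "T \<subseteq> L"
    using T0 p L(2) by (auto simp: T_def compact_eq_bounded_closed intro: bounded_subset)
  have [measurable]: "T0 \<in> sets borel" "T \<in> sets borel"
    using T0(1) T(1) by (auto intro: borel_closed borel_compact)
  have "emeasure lborel L \<le> emeasure lborel (T0 \<union> (L - T0))"
    using L(1) by (intro emeasure_mono) auto
  also have "\<dots> \<le> emeasure lborel T0 + emeasure lborel (L - T0)"
    using L(1) by (intro emeasure_subadditive) auto
  also have "\<dots> \<le> emeasure lborel T + e"
  proof (rule add_mono)
    show "emeasure lborel T0 \<le> emeasure lborel T"
      by (intro emeasure_mono) (auto simp: T_def)
    show "emeasure lborel (L - T0) \<le> e"
      using T0(3) L(1) by (simp add: emeasure_completion)
  qed
  finally show ?thesis
    using that T by (auto simp: T_def)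
qed

lemma brunn_minkowski_real_borel:
  fixes L :: "nat \<Rightarrow> real set" and S :: "real set"
  assumes k: "k \<ge> 1"
    and L: "\<And>i. i < k \<Longrightarrow> L i \<in> sets borel \<and> bounded (L i) \<and> L i \<noteq> {}"
    and S: "S \<in> sets borel"
    and mean: "\<And>s. (\<And>i. i < k \<Longrightarrow> s i \<in> L i) \<Longrightarrow> (\<Sum>i<k. s i) / k \<in> S"
  shows "(\<Sum>i<k. emeasure lborel (L i)) \<le> k * emeasure lborel S"
proof (rule ennreal_le_epsilon)
  fix e :: real assume "e > 0"
  then have "e / k > 0" using k by simp
  then have "\<exists>T. compact T \<and> T \<noteq> {} \<and> T \<subseteq> L i \<and> emeasure lborel (L i) \<le> emeasure lborel T + e / k"
    if "i < k" for i
    using emeasure_lborel_inner_compact L[OF that] by metis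
  then obtain T where T: "\<And>i. i < k \<Longrightarrow>
      compact (T i) \<and> T i \<noteq> {} \<and> T i \<subseteq> L i \<and> emeasure lborel (L i) \<le> emeasure lborel (T i) + e / k"
    by metis
  have "(\<Sum>i<k. T i) \<subseteq> k *o S"
  proof
    fix x assume "x \<in> (\<Sum>i<k. T i)"
    then obtain s where x: "x = (\<Sum>i<k. s i)" and s: "\<And>i. i < k \<Longrightarrow> s i \<in> T i"
      by (auto simp: set_sum_alt)
    have "x / k \<in> S" unfolding x using T s by (intro mean) blast
    then show "x \<in> k *o S" using k by (force simp: elt_set_times_def)
  qed
  moreover have "k *o S \<in> sets borel"
    using S k by (intro elt_set_times_borel) auto
  ultimately have "emeasure lborel (\<Sum>i<k. T i) \<le> emeasure lborel (k *o S)"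
    by (intro emeasure_mono) auto
  also have "\<dots> = k * emeasure lborel S"
    using S k by (simp add: emeasure_lborel_elt_set_times ennreal_of_nat_eq_real_of_nat)
  finally have "emeasure lborel (\<Sum>i<k. T i) \<le> k * emeasure lborel S" .
  moreover have "(\<Sum>i<k. emeasure lborel (L i)) \<le> (\<Sum>i<k. emeasure lborel (T i)) + e"
  proof -
    have "(\<Sum>i<k. emeasure lborel (L i)) \<le> (\<Sum>i<k. emeasure lborel (T i) + ennreal (e / k))"
      using T by (intro sum_mono) auto
    also have "\<dots> = (\<Sum>i<k. emeasure lborel (T i)) + e"
      using k \<open>e > 0\<close> by (simp add: sum.distrib ennreal_of_nat_eq_real_of_nat ennreal_mult[symmetric])
    finally show ?thesis .
  qed
  moreover have "(\<Sum>i<k. emeasure lborel (T i)) \<le> emeasure lborel (\<Sum>i<k. T i)"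
    using T by (intro brunn_minkowski_real_sum) auto
  ultimately show "(\<Sum>i<k. emeasure lborel (L i)) \<le> k * emeasure lborel S + e"
    by (meson add_right_mono order_trans)
qed

section \<open>The Prekopa-Leindler inequality on the real line\<close>

lemma emeasure_lborel_Ioi: "emeasure lborel {a::real<..} = \<infinity>"
proof (rule ccontr)
  assume "emeasure lborel {a<..} \<noteq> \<infinity>"
  then obtain r where r: "emeasure lborel {a<..} = ennreal r" "0 \<le> r"
    by (cases "emeasure lborel {a<..}") auto
  have "ennreal (r + 1) = emeasure lborel {a<..<a + (r + 1)}" using r by simp
  also have "\<dots> \<le> emeasure lborel {a<..}" by (rule emeasure_mono) auto
  finally show False using r by (simp add: ennreal_le_iff)
qed

lemma measurable_emeasure_superlevel:
  fixes g :: "'a \<Rightarrow> ennreal"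
  assumes M: "sigma_finite_measure M" and [measurable]: "g \<in> borel_measurable M"
  shows "(\<lambda>v. emeasure M {x \<in> space M. ennreal v < g x}) \<in> borel_measurable borel"
proof -
  have "{p \<in> space (borel \<Otimes>\<^sub>M M). ennreal (fst p) < g (snd p)} \<in> sets (borel \<Otimes>\<^sub>M M)"
    by measurable
  from sigma_finite_measure.measurable_emeasure_Pair[OF M this]
  show ?thesis by (simp add: vimage_def space_pair_measure Int_def conj_commute)
qed

lemma nn_integral_layer_cake:
  fixes g :: "'a \<Rightarrow> ennreal"
  assumes M: "sigma_finite_measure M" and [measurable]: "g \<in> borel_measurable M"
  shows "(\<integral>\<^sup>+x. g x \<partial>M) =
    (\<integral>\<^sup>+v. emeasure M {x \<in> space M. ennreal v < g x} * indicator {0<..} v \<partial>lborel)"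
proof -
  interpret pair_sigma_finite M lborel
    using M by (simp add: pair_sigma_finite_def lborel.sigma_finite_measure_axioms)
  define G :: "'a \<Rightarrow> real \<Rightarrow> ennreal" where "G x v = indicator {v. 0 < v \<and> ennreal v < g x} v" for x v
  have [measurable]: "case_prod G \<in> borel_measurable (M \<Otimes>\<^sub>M lborel)"
    unfolding G_def by measurable
  have inner: "(\<integral>\<^sup>+v. G x v \<partial>lborel) = g x" for x
  proof (cases "g x")
    case (real r)
    then have "G x = indicator {0<..<r}"
      by (auto simp: G_def fun_eq_iff ennreal_less_iff split: split_indicator)
    then show ?thesis using real by simp
  next
    case top
    then have "G x = indicator {0<..}" by (auto simp: G_def fun_eq_iff split: split_indicator)
    then show ?thesis using top by (simp add: emeasure_lborel_Ioi)
  qed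
  have outer: "(\<integral>\<^sup>+x. G x v \<partial>M) = emeasure M {x \<in> space M. ennreal v < g x} * indicator {0<..} v" for v
  proof -
    have "(\<integral>\<^sup>+x. G x v \<partial>M) = (\<integral>\<^sup>+x. indicator {x \<in> space M. ennreal v < g x} x * indicator {0<..} v \<partial>M)"
      by (intro nn_integral_cong) (auto simp: G_def split: split_indicator)
    also have "\<dots> = emeasure M {x \<in> space M. ennreal v < g x} * indicator {0<..} v"
      by (simp add: nn_integral_multc)
    finally show ?thesis .
  qed
  have "(\<integral>\<^sup>+x. g x \<partial>M) = (\<integral>\<^sup>+x. (\<integral>\<^sup>+v. G x v \<partial>lborel) \<partial>M)"
    by (simp add: inner)
  also have "\<dots> = (\<integral>\<^sup>+v. (\<integral>\<^sup>+x. G x v \<partial>M) \<partial>lborel)"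
    by (rule Fubini'[symmetric]) measurable
  finally show ?thesis
    by (simp add: outer)
qed

lemma nn_integral_layer_cake_unit:
  fixes F :: "real \<Rightarrow> real"
  assumes [measurable]: "F \<in> borel_measurable borel" and F: "\<And>t. 0 \<le> F t \<and> F t \<le> 1"
  shows "(\<integral>\<^sup>+t. F t \<partial>lborel) = (\<integral>\<^sup>+v. emeasure lborel {t. v < F t} * indicator {0<..<1} v \<partial>lborel)"
proof -
  have "(\<integral>\<^sup>+t. F t \<partial>lborel) =
      (\<integral>\<^sup>+v. emeasure lborel {t. ennreal v < ennreal (F t)} * indicator {0<..} v \<partial>lborel)"
    using nn_integral_layer_cake[OF lborel.sigma_finite_measure_axioms, of "\<lambda>t. ennreal (F t)"] by simp
  also have "\<dots> = (\<integral>\<^sup>+v. emeasure lborel {t. v < F t} * indicator {0<..<1} v \<partial>lborel)"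
  proof (intro nn_integral_cong)
    fix v :: real
    have "{t. v < F t} = {}" if "1 \<le> v" using F that by (auto simp: not_less intro: order_trans)
    moreover have "{t. ennreal v < ennreal (F t)} = {t. v < F t}" if "0 < v"
      using that by (simp add: ennreal_less_iff)
    ultimately show "emeasure lborel {t. ennreal v < ennreal (F t)} * indicator {0<..} v =
        emeasure lborel {t. v < F t} * indicator {0<..<1} v"
      by (cases "0 < v"; cases "v < 1") auto
  qed
  finally show ?thesis .
qed

lemma prekopa_leindler_real_normalized:
  fixes F :: "nat \<Rightarrow> real \<Rightarrow> real" and H :: "real \<Rightarrow> ennreal"
  assumes k: "k \<ge> 1"
    and [measurable]: "\<And>i. i < k \<Longrightarrow> F i \<in> borel_measurable borel" "H \<in> borel_measurable borel"
    and F01: "\<And>i t. i < k \<Longrightarrow> 0 \<le> F i t \<and> F i t \<le> 1"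
    and F_sup: "\<And>i v. i < k \<Longrightarrow> 0 < v \<Longrightarrow> v < 1 \<Longrightarrow> \<exists>t. v < F i t"
    and F_supp: "\<And>i. i < k \<Longrightarrow> bounded {t. F i t \<noteq> 0}"
    and FH: "\<And>s. (\<Prod>i<k. ennreal (F i (s i))) \<le> H ((\<Sum>i<k. s i) / k) ^ k"
  shows "(\<Sum>i<k. \<integral>\<^sup>+t. F i t \<partial>lborel) \<le> k * (\<integral>\<^sup>+t. H t \<partial>lborel)"
proof -
  have level: "(\<Sum>i<k. emeasure lborel {t. v < F i t}) \<le> k * emeasure lborel {t. ennreal v < H t}"
    if v: "0 < v" "v < 1" for v
  proof (rule brunn_minkowski_real_borel[OF k])
    fix i assume i: "i < k"
    have "{t. v < F i t} \<subseteq> {t. F i t \<noteq> 0}" using v by auto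
    with F_sup[OF i v] F_supp[OF i] show "{t. v < F i t} \<in> sets borel \<and> bounded {t. v < F i t} \<and> {t. v < F i t} \<noteq> {}"
      using i by (auto intro: bounded_subset)
  next
    fix s assume s: "\<And>i. i < k \<Longrightarrow> s i \<in> {t. v < F i t}"
    have "(\<Prod>i<k. v) < (\<Prod>i<k. F i (s i))"
      using s k v by (intro prod_mono_strict[of 0]) (auto intro: less_imp_le less_trans)
    then have "v ^ k < (\<Prod>i<k. F i (s i))" by simp
    then have "ennreal v ^ k < (\<Prod>i<k. ennreal (F i (s i)))"
      using v F01 by (subst prod_ennreal) (auto simp: ennreal_power ennreal_less_iff)
    also have "\<dots> \<le> H ((\<Sum>i<k. s i) / k) ^ k" by (rule FH)
    finally show "(\<Sum>i<k. s i) / k \<in> {t. ennreal v < H t}"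
      using power_mono[of "H ((\<Sum>i<k. s i) / k)" "ennreal v" k] by (force simp: not_less)
  qed simp
  have "(\<Sum>i<k. \<integral>\<^sup>+t. F i t \<partial>lborel)
      = \<integral>\<^sup>+v. (\<Sum>i<k. emeasure lborel {t. v < F i t} * indicator {0<..<1} v) \<partial>lborel"
    using F01 by (subst nn_integral_sum) (auto simp: nn_integral_layer_cake_unit)
  also have "\<dots> \<le> \<integral>\<^sup>+v. k * (emeasure lborel {t. ennreal v < H t} * indicator {0<..} v) \<partial>lborel"
    using level by (intro nn_integral_mono) (auto simp: sum_distrib_right[symmetric] split: split_indicator)
  also have "\<dots> = k * (\<integral>\<^sup>+t. H t \<partial>lborel)"
    using nn_integral_layer_cake[OF lborel.sigma_finite_measure_axioms, of H]
      measurable_emeasure_superlevel[OF lborel.sigma_finite_measure_axioms, of H]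
    by (simp add: nn_integral_cmult)
  finally show ?thesis .
qed

lemma prod_le_power_if_sum_le_ennreal:
  fixes x :: "nat \<Rightarrow> ennreal"
  assumes sum_le: "(\<Sum>i<k. x i) \<le> of_nat k * y"
  shows "(\<Prod>i<k. x i) \<le> y ^ k"
proof (cases "k = 0 \<or> y = \<infinity>")
  case True
  then show ?thesis by (cases "k = 0") (auto simp: power_eq_top_ennreal top_unique)
next
  case False
  then obtain r where y: "y = ennreal r" "0 \<le> r" and k: "k > 0"
    by (cases y) auto
  have x_le: "x i \<le> ennreal (k * r)" if "i < k" for i
    using that sum_le y member_le_sum[of i "{..<k}" x]
    by (auto simp: ennreal_mult ennreal_of_nat_eq_real_of_nat)
  define a where "a i = enn2real (x i)" for i
  have x: "x i = ennreal (a i)" "0 \<le> a i" if "i < k" for i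
  proof -
    have "x i < \<infinity>" using le_less_trans[OF x_le[OF that]] by simp
    then show "x i = ennreal (a i)" "0 \<le> a i" by (simp_all add: a_def)
  qed
  have "ennreal (\<Sum>i<k. a i) = (\<Sum>i<k. x i)"
    using x by (subst sum_ennreal[symmetric]) auto
  also have "\<dots> \<le> ennreal (k * r)"
    using sum_le y by (simp add: ennreal_mult ennreal_of_nat_eq_real_of_nat)
  finally have "ennreal (\<Sum>i<k. a i) \<le> ennreal (k * r)" .
  then have "(\<Sum>i<k. a i) / k \<le> r"
    using k y by (simp add: divide_le_eq mult.commute)
  moreover have P: "(\<Prod>i<k. a i) \<ge> 0" using x by (intro prod_nonneg) auto
  then have "root k (\<Prod>i<k. a i) \<le> (\<Sum>i<k. a i) / k"
    using arith_geom_mean[of "{..<k}" a] k x by (auto simp: sum_divide_distrib root_powr_inverse)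
  ultimately have "root k (\<Prod>i<k. a i) ^ k \<le> r ^ k"
    using P by (intro power_mono) (auto simp: real_root_ge_zero)
  then have "(\<Prod>i<k. a i) \<le> r ^ k" using k P by simp
  moreover have "(\<Prod>i<k. x i) = ennreal (\<Prod>i<k. a i)"
    using x by (subst prod_ennreal[symmetric]) auto
  ultimately show ?thesis
    using y by (simp add: ennreal_power)
qed

lemma Sup_range_pos_approx:
  fixes F :: "'a \<Rightarrow> real"
  assumes bdd: "bdd_above (range F)" and nonneg: "\<And>t. 0 \<le> F t" and "F t0 \<noteq> 0"
  shows "0 < Sup (range F)" "\<And>v. 0 < v \<Longrightarrow> v < 1 \<Longrightarrow> \<exists>t. v * Sup (range F) < F t"
proof -
  have "F t0 \<le> Sup (range F)" using bdd by (intro cSup_upper) auto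
  then show pos: "0 < Sup (range F)" using nonneg[of t0] \<open>F t0 \<noteq> 0\<close> by linarith
  fix v :: real assume "0 < v" "v < 1"
  then have "v * Sup (range F) < Sup (range F)" using pos by simp
  then show "\<exists>t. v * Sup (range F) < F t" using bdd by (auto simp: less_cSup_iff)
qed

lemma prod_nn_integral_rescale:
  fixes F :: "nat \<Rightarrow> real \<Rightarrow> real" and H :: "real \<Rightarrow> ennreal" and M :: "nat \<Rightarrow> real"
  assumes [measurable]: "\<And>i. i < k \<Longrightarrow> F i \<in> borel_measurable borel"
    and F_nonneg: "\<And>i t. i < k \<Longrightarrow> 0 \<le> F i t"
    and M: "\<And>i. i < k \<Longrightarrow> 0 < M i" and c: "c > 0" "c ^ k = (\<Prod>i<k. M i)"
    and scaled: "(\<Prod>i<k. \<integral>\<^sup>+t. F i t / M i \<partial>lborel) \<le> (ennreal (1 / c) * (\<integral>\<^sup>+t. H t \<partial>lborel)) ^ k"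
  shows "(\<Prod>i<k. \<integral>\<^sup>+t. F i t \<partial>lborel) \<le> (\<integral>\<^sup>+t. H t \<partial>lborel) ^ k"
proof -
  have "(\<integral>\<^sup>+t. F i t \<partial>lborel) = M i * (\<integral>\<^sup>+t. F i t / M i \<partial>lborel)" if "i < k" for i
    using M[OF that] F_nonneg[OF that] that
    by (subst nn_integral_cmult[symmetric]) (auto simp: ennreal_mult[symmetric])
  then have "(\<Prod>i<k. \<integral>\<^sup>+t. F i t \<partial>lborel) = (\<Prod>i<k. ennreal (M i)) * (\<Prod>i<k. \<integral>\<^sup>+t. F i t / M i \<partial>lborel)"
    by (simp add: prod.distrib)
  also have "\<dots> \<le> ennreal c ^ k * (ennreal (1 / c) * (\<integral>\<^sup>+t. H t \<partial>lborel)) ^ k"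
    using M c scaled by (subst prod_ennreal) (auto simp: less_imp_le ennreal_power intro: mult_left_mono)
  also have "\<dots> = (ennreal c * ennreal (1 / c) * (\<integral>\<^sup>+t. H t \<partial>lborel)) ^ k"
    by (simp add: power_mult_distrib mult.assoc)
  also have "ennreal c * ennreal (1 / c) = 1"
    using c(1) by (simp flip: ennreal_mult)
  finally show ?thesis by simp
qed

lemma prekopa_leindler_real_bounded:
  fixes F :: "nat \<Rightarrow> real \<Rightarrow> real" and H :: "real \<Rightarrow> ennreal"
  assumes k: "k \<ge> 1"
    and [measurable]: "\<And>i. i < k \<Longrightarrow> F i \<in> borel_measurable borel" "H \<in> borel_measurable borel"
    and F_nonneg: "\<And>i t. i < k \<Longrightarrow> 0 \<le> F i t"
    and F_bdd: "\<And>i. i < k \<Longrightarrow> bdd_above (range (F i))"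
    and F_supp: "\<And>i. i < k \<Longrightarrow> bounded {t. F i t \<noteq> 0}"
    and FH: "\<And>s. (\<Prod>i<k. ennreal (F i (s i))) \<le> H ((\<Sum>i<k. s i) / k) ^ k"
  shows "(\<Prod>i<k. \<integral>\<^sup>+t. F i t \<partial>lborel) \<le> (\<integral>\<^sup>+t. H t \<partial>lborel) ^ k"
proof (cases "\<exists>i<k. \<forall>t. F i t = 0")
  case True
  then have "(\<Prod>i<k. \<integral>\<^sup>+t. F i t \<partial>lborel) = 0"
    by (auto intro!: prod_zero bexI)
  then show ?thesis by (metis zero_le)
next
  case False
  txt \<open>Dividing \<open>F\<^sub>i\<close> by its supremum \<open>M\<^sub>i\<close> and \<open>H\<close> by \<open>c = (\<Prod>\<^sub>i M\<^sub>i)\<^bsup>1/k\<^esup>\<close> leads to the additive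
    form; AM-GM turns its sum bound into the product bound.\<close>
  define M where "M i = Sup (range (F i))" for i
  note M = Sup_range_pos_approx[OF F_bdd F_nonneg, folded M_def]
  have F_le_M: "F i t \<le> M i" if "i < k" for i t
    unfolding M_def using F_bdd[OF that] by (intro cSup_upper) auto
  have M_pos: "0 < M i" if "i < k" for i
    using False M(1) that by blast
  define c where "c = root k (\<Prod>i<k. M i)"
  have M_prod: "(\<Prod>i<k. M i) > 0" using M_pos by (intro prod_pos) auto
  then have c: "c > 0" "c ^ k = (\<Prod>i<k. M i)"
    using k by (simp_all add: c_def)
  have "(\<Sum>i<k. \<integral>\<^sup>+t. F i t / M i \<partial>lborel) \<le> k * (\<integral>\<^sup>+t. H t * ennreal (1 / c) \<partial>lborel)"
  proof (rule prekopa_leindler_real_normalized[OF k])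
    fix i assume i: "i < k"
    show "\<And>t. 0 \<le> F i t / M i \<and> F i t / M i \<le> 1"
      using F_nonneg[OF i] F_le_M[OF i] M_pos[OF i] by simp
    show "bounded {t. F i t / M i \<noteq> 0}"
      using F_supp[OF i] M_pos[OF i] by simp
    show "\<exists>t. v < F i t / M i" if "0 < v" "v < 1" for v
      using False M(2) M_pos[OF i] that i by (auto simp: pos_less_divide_eq)
  next
    fix s :: "nat \<Rightarrow> real"
    have "(\<Prod>i<k. F i (s i)) \<ge> 0" using F_nonneg by (intro prod_nonneg) auto
    then have "(\<Prod>i<k. ennreal (F i (s i) / M i)) = ennreal (\<Prod>i<k. F i (s i)) * ennreal (1 / c ^ k)"
      using F_nonneg M_pos c M_prod
      by (subst prod_ennreal) (auto simp: prod_dividef less_imp_le simp flip: ennreal_mult)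
    also have "\<dots> \<le> H ((\<Sum>i<k. s i) / k) ^ k * ennreal (1 / c ^ k)"
      using F_nonneg FH by (subst prod_ennreal[symmetric]) (auto intro: mult_right_mono)
    also have "\<dots> = (H ((\<Sum>i<k. s i) / k) * ennreal (1 / c)) ^ k"
      using c(1) by (simp add: power_mult_distrib ennreal_power power_divide)
    finally show "(\<Prod>i<k. ennreal (F i (s i) / M i)) \<le> (H ((\<Sum>i<k. s i) / k) * ennreal (1 / c)) ^ k" .
  qed simp_all
  then have "(\<Prod>i<k. \<integral>\<^sup>+t. F i t / M i \<partial>lborel) \<le> (ennreal (1 / c) * (\<integral>\<^sup>+t. H t \<partial>lborel)) ^ k"
    by (intro prod_le_power_if_sum_le_ennreal) (simp add: nn_integral_multc mult.commute)
  then show ?thesis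
    using F_nonneg M_pos c by (intro prod_nn_integral_rescale) auto
qed

lemma SUP_mult_SUP_incseq_ennreal:
  fixes f g :: "nat \<Rightarrow> ennreal"
  assumes f: "incseq f" and g: "incseq g"
  shows "(SUP n. f n) * (SUP n. g n) = (SUP n. f n * g n)"
proof (rule antisym)
  show "(SUP n. f n) * (SUP n. g n) \<le> (SUP n. f n * g n)"
    unfolding SUP_mult_right_ennreal SUP_mult_left_ennreal
  proof (intro SUP_least)
    fix n m
    have "f n * g m \<le> f (max n m) * g (max n m)"
      using f g by (intro mult_mono) (auto simp: incseq_def)
    also have "\<dots> \<le> (SUP n. f n * g n)" by (rule SUP_upper) simp
    finally show "f n * g m \<le> (SUP n. f n * g n)" .
  qed
  show "(SUP n. f n * g n) \<le> (SUP n. f n) * (SUP n. g n)"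
    by (intro SUP_least mult_mono SUP_upper) auto
qed

lemma prod_SUP_incseq_ennreal:
  fixes a :: "'i \<Rightarrow> nat \<Rightarrow> ennreal"
  assumes "finite I" "\<And>i. i \<in> I \<Longrightarrow> incseq (a i)"
  shows "(\<Prod>i\<in>I. SUP n. a i n) = (SUP n. \<Prod>i\<in>I. a i n)"
  using assms
proof (induction I rule: finite_induct)
  case (insert j I)
  have "incseq (\<lambda>n. \<Prod>i\<in>I. a i n)"
    using insert.prems by (auto simp: incseq_def intro!: prod_mono_ennreal)
  then have "(SUP n. a j n) * (SUP n. \<Prod>i\<in>I. a i n) = (SUP n. a j n * (\<Prod>i\<in>I. a i n))"
    using insert.prems by (intro SUP_mult_SUP_incseq_ennreal) auto
  then show ?case
    using insert by simp
qed simp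

definition truncation :: "nat \<Rightarrow> (real \<Rightarrow> ennreal) \<Rightarrow> real \<Rightarrow> ennreal" where
  "truncation n f t = min (f t) (of_nat n) * indicator {- real n..real n} t"

lemma truncation_le: "truncation n f t \<le> f t"
  by (auto simp: truncation_def split: split_indicator)

lemma incseq_truncation: "incseq (\<lambda>n. truncation n f t)"
proof (rule incseq_SucI)
  fix n
  have "min (f t) (of_nat n) \<le> min (f t) (of_nat (Suc n))"
    by (simp add: min_le_iff_disj)
  moreover have "indicator {- real n..real n} t \<le> (indicator {- real (Suc n)..real (Suc n)} t :: ennreal)"
    by (simp split: split_indicator)
  ultimately show "truncation n f t \<le> truncation (Suc n) f t"
    unfolding truncation_def by (rule mult_mono) auto
qed

lemma SUP_truncation:
  fixes f :: "real \<Rightarrow> ennreal"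
  shows "(SUP n. truncation n f t) = f t"
proof -
  have inc_min: "incseq (\<lambda>n. min (f t) (of_nat n))"
    by (intro monoI min.mono) auto
  have inc_ind: "incseq (\<lambda>n. indicator {- real n..real n} t :: ennreal)"
    by (intro monoI) (simp split: split_indicator)
  have "(SUP n. min (f t) (of_nat n) * indicator {- real n..real n} t)
      = (SUP n. min (f t) (of_nat n)) * (SUP n. indicator {- real n..real n} t)"
    using SUP_mult_SUP_incseq_ennreal[OF inc_min inc_ind] by (rule sym)
  also have "(SUP n. min (f t) (of_nat n)) = f t"
    using inf_SUP[of "f t" of_nat UNIV] by (simp add: inf_min ennreal_SUP_of_nat_eq_top)
  also have "(SUP n. indicator {- real n..real n} t :: ennreal) = 1"
  proof (rule antisym)
    obtain m where "\<bar>t\<bar> \<le> real m" using real_arch_simple by blast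
    then have "(1::ennreal) = indicator {- real m..real m} t" by (simp add: abs_le_iff)
    also have "\<dots> \<le> (SUP n. indicator {- real n..real n} t)"
      by (rule SUP_upper) simp
    finally show "1 \<le> (SUP n. indicator {- real n..real n} t :: ennreal)" .
    show "(SUP n. indicator {- real n..real n} t :: ennreal) \<le> 1"
      by (rule SUP_least) (simp split: split_indicator)
  qed
  finally show ?thesis by (simp add: truncation_def)
qed

lemma prekopa_leindler_real_truncation:
  fixes F :: "nat \<Rightarrow> real \<Rightarrow> ennreal" and H :: "real \<Rightarrow> ennreal"
  assumes k: "k \<ge> 1"
    and [measurable]: "\<And>i. i < k \<Longrightarrow> F i \<in> borel_measurable borel" "H \<in> borel_measurable borel"
    and FH: "\<And>s. (\<Prod>i<k. F i (s i)) \<le> H ((\<Sum>i<k. s i) / k) ^ k"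
  shows "(\<Prod>i<k. \<integral>\<^sup>+t. truncation n (F i) t \<partial>lborel) \<le> (\<integral>\<^sup>+t. H t \<partial>lborel) ^ k"
proof -
  let ?G = "\<lambda>i t. enn2real (truncation n (F i) t)"
  have finite: "truncation n (F i) t = ennreal (?G i t)" for i t
    by (auto simp: truncation_def min_def ennreal_of_nat_eq_real_of_nat split: split_indicator
        intro!: ennreal_enn2real[symmetric] le_less_trans[OF _ of_nat_less_top])
  have "(\<Prod>i<k. \<integral>\<^sup>+t. ?G i t \<partial>lborel) \<le> (\<integral>\<^sup>+t. H t \<partial>lborel) ^ k"
  proof (rule prekopa_leindler_real_bounded[OF k])
    fix i assume "i < k"
    then show "?G i \<in> borel_measurable borel"
      unfolding truncation_def by measurable
    show "bdd_above (range (?G i))"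
    proof (rule bdd_aboveI[of _ "real n"])
      have "truncation n (F i) t \<le> ennreal n" for t
        by (auto simp: truncation_def ennreal_of_nat_eq_real_of_nat split: split_indicator)
      then show "y \<le> real n" if "y \<in> range (?G i)" for y
        using that by (auto simp: enn2real_leI)
    qed
    have "{t. ?G i t \<noteq> 0} \<subseteq> {- real n..real n}"
      by (auto simp: truncation_def split: split_indicator)
    then show "bounded {t. ?G i t \<noteq> 0}"
      by (rule bounded_subset[OF bounded_closed_interval])
  next
    fix s :: "nat \<Rightarrow> real"
    have "(\<Prod>i<k. ennreal (?G i (s i))) \<le> (\<Prod>i<k. F i (s i))"
      by (subst finite[symmetric]) (intro prod_mono_ennreal truncation_le)
    then show "(\<Prod>i<k. ennreal (?G i (s i))) \<le> H ((\<Sum>i<k. s i) / k) ^ k"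
      using FH order_trans by blast
  qed auto
  then show ?thesis by (simp flip: finite)
qed

lemma prekopa_leindler_real:
  fixes F :: "nat \<Rightarrow> real \<Rightarrow> ennreal" and H :: "real \<Rightarrow> ennreal"
  assumes k: "k \<ge> 1"
    and [measurable]: "\<And>i. i < k \<Longrightarrow> F i \<in> borel_measurable borel" "H \<in> borel_measurable borel"
    and FH: "\<And>s. (\<Prod>i<k. F i (s i)) \<le> H ((\<Sum>i<k. s i) / k) ^ k"
  shows "(\<Prod>i<k. \<integral>\<^sup>+t. F i t \<partial>lborel) \<le> (\<integral>\<^sup>+t. H t \<partial>lborel) ^ k"
proof -
  have "(\<integral>\<^sup>+t. F i t \<partial>lborel) = (SUP n. \<integral>\<^sup>+t. truncation n (F i) t \<partial>lborel)" if "i < k" for i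
  proof -
    have "(\<integral>\<^sup>+t. F i t \<partial>lborel) = (\<integral>\<^sup>+t. (SUP n. truncation n (F i) t) \<partial>lborel)"
      by (simp add: SUP_truncation)
    also have "\<dots> = (SUP n. \<integral>\<^sup>+t. truncation n (F i) t \<partial>lborel)"
      using incseq_truncation that unfolding truncation_def
      by (intro nn_integral_monotone_convergence_SUP) (auto simp: incseq_def le_fun_def)
    finally show ?thesis .
  qed
  then have "(\<Prod>i<k. \<integral>\<^sup>+t. F i t \<partial>lborel) = (\<Prod>i<k. SUP n. \<integral>\<^sup>+t. truncation n (F i) t \<partial>lborel)"
    by simp
  also have "\<dots> = (SUP n. \<Prod>i<k. \<integral>\<^sup>+t. truncation n (F i) t \<partial>lborel)"
    using incseq_truncation
    by (intro prod_SUP_incseq_ennreal) (auto simp: incseq_def le_fun_def intro!: nn_integral_mono)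
  also have "\<dots> \<le> (\<integral>\<^sup>+t. H t \<partial>lborel) ^ k"
    by (intro SUP_least prekopa_leindler_real_truncation[OF k]) (use FH in auto)
  finally show ?thesis .
qed

lemma nn_integral_indicator_UN_incseq:
  fixes f :: "'a \<Rightarrow> ennreal"
  assumes [measurable]: "f \<in> borel_measurable M" "\<And>n. A n \<in> sets M" and "incseq A"
  shows "(\<integral>\<^sup>+x. f x * indicator (\<Union>n. A n) x \<partial>M) = (SUP n. \<integral>\<^sup>+x. f x * indicator (A n) x \<partial>M)"
proof -
  have "range A \<subseteq> sets (density M f)" using assms(2) by auto
  from SUP_emeasure_incseq[OF this \<open>incseq A\<close>] show ?thesis
    by (simp add: emeasure_density)
qed

lemma nn_integral_Ioi_exp_substitution:
  fixes g :: "real \<Rightarrow> ennreal"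
  assumes [measurable]: "g \<in> borel_measurable borel"
  shows "(\<integral>\<^sup>+x. g x * indicator {0<..} x \<partial>lborel) = (\<integral>\<^sup>+s. g (exp s) * exp s \<partial>lborel)"
proof -
  define J where "J m = {- real (Suc m)..real (Suc m)}" for m
  define I where "I m = {exp (- real (Suc m))..exp (real (Suc m))}" for m
  have I_iff: "x \<in> I m \<longleftrightarrow> ln x \<in> J m" if "x > 0" for x m
    using that ln_ge_iff[OF that] ln_le_cancel_iff[OF that exp_gt_zero] by (auto simp: I_def J_def)
  have J_UN: "(\<Union>m. J m) = UNIV"
  proof -
    have "s \<in> J (nat \<lceil>\<bar>s\<bar>\<rceil>)" for s by (auto simp: J_def) linarith+
    then show ?thesis by blast
  qed
  have "(\<Union>m. I m) = {0<..}"
  proof (intro equalityI subsetI)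
    fix x assume "x \<in> (\<Union>m. I m)"
    then show "x \<in> {0<..}" by (auto simp: I_def intro: less_le_trans[OF exp_gt_zero])
  next
    fix x :: real assume "x \<in> {0<..}"
    moreover obtain m where "ln x \<in> J m" using J_UN by blast
    ultimately show "x \<in> (\<Union>m. I m)" using I_iff by auto
  qed
  then have "(\<integral>\<^sup>+x. g x * indicator {0<..} x \<partial>lborel) = (\<integral>\<^sup>+x. g x * indicator (\<Union>m. I m) x \<partial>lborel)"
    by simp
  also have "\<dots> = (SUP m. \<integral>\<^sup>+x. g x * indicator (I m) x \<partial>lborel)"
    by (rule nn_integral_indicator_UN_incseq) (auto simp: I_def incseq_def)
  also have "\<dots> = (SUP m. \<integral>\<^sup>+s. g (exp s) * exp s * indicator (J m) s \<partial>lborel)"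
    unfolding I_def J_def by (subst nn_integral_substitution_aux) (auto intro!: DERIV_exp continuous_intros)
  also have "\<dots> = (\<integral>\<^sup>+s. g (exp s) * exp s * indicator (\<Union>m. J m) s \<partial>lborel)"
    by (rule nn_integral_indicator_UN_incseq[symmetric]) (auto simp: J_def incseq_def)
  finally show ?thesis
    by (simp add: J_UN)
qed

lemma prekopa_leindler_real_multiplicative:
  fixes f :: "nat \<Rightarrow> real \<Rightarrow> ennreal" and h :: "real \<Rightarrow> ennreal"
  assumes k: "k \<ge> 1"
    and [measurable]: "\<And>i. i < k \<Longrightarrow> f i \<in> borel_measurable borel" "h \<in> borel_measurable borel"
    and fh: "\<And>t. (\<And>i. i < k \<Longrightarrow> 0 < t i) \<Longrightarrow> (\<Prod>i<k. f i (t i)) \<le> h (\<Prod>i<k. t i powr (1 / k)) ^ k"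
  shows "(\<Prod>i<k. \<integral>\<^sup>+x. f i x * indicator {0<..} x \<partial>lborel) \<le> (\<integral>\<^sup>+x. h x * indicator {0<..} x \<partial>lborel) ^ k"
proof -
  have "(\<Prod>i<k. \<integral>\<^sup>+s. f i (exp s) * exp s \<partial>lborel) \<le> (\<integral>\<^sup>+s. h (exp s) * exp s \<partial>lborel) ^ k"
  proof (rule prekopa_leindler_real[OF k])
    fix s :: "nat \<Rightarrow> real"
    define m where "m = (\<Sum>i<k. s i) / k"
    have geom_mean: "(\<Prod>i<k. exp (s i) powr (1 / k)) = exp m"
      by (simp add: powr_def exp_sum m_def sum_divide_distrib)
    have exp_prod: "(\<Prod>i<k. ennreal (exp (s i))) = ennreal (exp m) ^ k"
      using k by (simp add: prod_ennreal exp_sum ennreal_power m_def flip: exp_of_nat_mult)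
    have "(\<Prod>i<k. f i (exp (s i)) * exp (s i)) = (\<Prod>i<k. f i (exp (s i))) * ennreal (exp m) ^ k"
      by (simp add: prod.distrib exp_prod)
    also have "\<dots> \<le> h (exp m) ^ k * ennreal (exp m) ^ k"
      using fh[of "\<lambda>i. exp (s i)"] geom_mean by (intro mult_right_mono) auto
    finally show "(\<Prod>i<k. f i (exp (s i)) * exp (s i)) \<le> (h (exp m) * exp m) ^ k"
      by (simp add: power_mult_distrib)
  qed auto
  then show ?thesis
    by (simp add: nn_integral_Ioi_exp_substitution)
qed

lemma nn_integral_lborel_split_sign:
  fixes f :: "real \<Rightarrow> ennreal"
  assumes [measurable]: "f \<in> borel_measurable borel"
  shows "(\<integral>\<^sup>+x. f x \<partial>lborel) =
    (\<integral>\<^sup>+x. f x * indicator {0<..} x \<partial>lborel) + (\<integral>\<^sup>+x. f (- x) * indicator {0<..} x \<partial>lborel)"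
proof -
  have "(\<integral>\<^sup>+x. f x \<partial>lborel) = (\<integral>\<^sup>+x. f x * indicator {0<..} x + f x * indicator {..<0} x \<partial>lborel)"
    using AE_lborel_singleton[of 0]
    by (intro nn_integral_cong_AE) (auto elim!: eventually_mono split: split_indicator)
  also have "\<dots> = (\<integral>\<^sup>+x. f x * indicator {0<..} x \<partial>lborel) + (\<integral>\<^sup>+x. f x * indicator {..<0} x \<partial>lborel)"
    by (rule nn_integral_add) auto
  also have "(\<integral>\<^sup>+x. f x * indicator {..<0} x \<partial>lborel) = (\<integral>\<^sup>+x. f (- x) * indicator {0<..} x \<partial>lborel)"
    by (subst nn_integral_real_affine[where c = "-1" and t = 0]) (auto intro!: nn_integral_cong split: split_indicator)
  finally show ?thesis .
qed

lemma nn_integral_lborel_le_fold: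
  fixes f :: "real \<Rightarrow> ennreal"
  assumes [measurable]: "f \<in> borel_measurable borel"
  shows "(\<integral>\<^sup>+x. f x \<partial>lborel) \<le> 2 * (\<integral>\<^sup>+x. max (f x) (f (- x)) * indicator {0<..} x \<partial>lborel)"
proof -
  have "(\<integral>\<^sup>+x. f x \<partial>lborel) =
      (\<integral>\<^sup>+x. f x * indicator {0<..} x \<partial>lborel) + (\<integral>\<^sup>+x. f (- x) * indicator {0<..} x \<partial>lborel)"
    by (rule nn_integral_lborel_split_sign) simp
  also have "\<dots> \<le> (\<integral>\<^sup>+x. max (f x) (f (- x)) * indicator {0<..} x \<partial>lborel)
      + (\<integral>\<^sup>+x. max (f x) (f (- x)) * indicator {0<..} x \<partial>lborel)"
    by (intro add_mono nn_integral_mono mult_right_mono) auto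
  finally show ?thesis by (simp add: mult_2)
qed

lemma prekopa_leindler_real_signs:
  fixes f :: "nat \<Rightarrow> real \<Rightarrow> ennreal" and h :: "real \<Rightarrow> ennreal"
  assumes k: "k \<ge> 1"
    and [measurable]: "\<And>i. i < k \<Longrightarrow> f i \<in> borel_measurable borel" "h \<in> borel_measurable borel"
    and fh: "\<And>t \<sigma>. \<sigma> = 1 \<or> \<sigma> = -1 \<Longrightarrow> (\<Prod>i<k. f i (t i)) \<le> h (\<sigma> * (\<Prod>i<k. \<bar>t i\<bar> powr (1 / k))) ^ k"
  shows "(\<Prod>i<k. \<integral>\<^sup>+x. f i x \<partial>lborel) \<le> (\<integral>\<^sup>+x. h x \<partial>lborel) ^ k"
proof -
  txt \<open>Folding \<open>f\<^sub>i\<close> onto the half-line loses a factor 2 for each \<open>i\<close>; it is recovered because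
    the folded problem is dominated by \<open>h\<close> on both half-lines, so \<open>P \<le> min A B\<^sup>k\<close>.\<close>
  define g where "g i x = max (f i x) (f i (- x))" for i x
  have gh: "(\<Prod>i<k. g i (t i)) \<le> h (\<sigma> * (\<Prod>i<k. t i powr (1 / k))) ^ k"
    if "\<sigma> = 1 \<or> \<sigma> = -1" and t: "\<And>i. i < k \<Longrightarrow> 0 < t i" for t \<sigma>
  proof -
    define t' where "t' i = (if f i (- t i) \<le> f i (t i) then t i else - t i)" for i
    have "(\<Prod>i<k. g i (t i)) = (\<Prod>i<k. f i (t' i))"
      by (intro prod.cong) (auto simp: g_def t'_def max_def)
    also have "\<dots> \<le> h (\<sigma> * (\<Prod>i<k. \<bar>t' i\<bar> powr (1 / k))) ^ k"
      by (rule fh) fact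
    also have "(\<Prod>i<k. \<bar>t' i\<bar> powr (1 / k)) = (\<Prod>i<k. t i powr (1 / k))"
      by (intro prod.cong) (auto simp: t'_def abs_of_pos t)
    finally show ?thesis .
  qed
  define P where "P = (\<Prod>i<k. \<integral>\<^sup>+x. g i x * indicator {0<..} x \<partial>lborel)"
  define A where "A = (\<integral>\<^sup>+x. h x * indicator {0<..} x \<partial>lborel)"
  define B where "B = (\<integral>\<^sup>+x. h (- x) * indicator {0<..} x \<partial>lborel)"
  have "P \<le> A ^ k"
    unfolding P_def A_def g_def using gh[of 1]
    by (intro prekopa_leindler_real_multiplicative[OF k]) (auto simp: g_def)
  moreover have "P \<le> B ^ k"
    unfolding P_def B_def g_def using gh[of "-1"]
    by (intro prekopa_leindler_real_multiplicative[OF k]) (auto simp: g_def)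
  ultimately have "P \<le> min A B ^ k"
    by (cases "A \<le> B") (simp_all add: min_def)
  have "(\<Prod>i<k. \<integral>\<^sup>+x. f i x \<partial>lborel) \<le> (\<Prod>i<k. 2 * (\<integral>\<^sup>+x. g i x * indicator {0<..} x \<partial>lborel))"
    unfolding g_def by (intro prod_mono_ennreal nn_integral_lborel_le_fold) simp
  also have "\<dots> = 2 ^ k * P"
    by (simp add: P_def prod.distrib)
  also have "\<dots> \<le> 2 ^ k * min A B ^ k"
    using \<open>P \<le> min A B ^ k\<close> by (rule mult_left_mono) simp
  also have "\<dots> = (min A B + min A B) ^ k"
    by (simp add: power_mult_distrib mult_2[symmetric])
  also have "\<dots> \<le> (A + B) ^ k"
    by (intro power_mono add_mono) simp_all
  also have "A + B = (\<integral>\<^sup>+x. h x \<partial>lborel)"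
    unfolding A_def B_def by (rule nn_integral_lborel_split_sign[symmetric]) simp
  finally show ?thesis .
qed

section \<open>The Prekopa-Leindler inequality in several variables\<close>

lemma borel_measurable_nn_integral_fiber:
  fixes f :: "('a \<Rightarrow> real) \<Rightarrow> ennreal"
  assumes "j \<notin> I" and f: "f \<in> borel_measurable (PiM (insert j I) (\<lambda>_. lborel))"
  shows "(\<lambda>x. \<integral>\<^sup>+t. f (x(j := t)) \<partial>lborel) \<in> borel_measurable (PiM I (\<lambda>_. lborel))"
proof -
  have "(\<lambda>(x, t). x(j := t)) \<in> PiM I (\<lambda>_. lborel) \<Otimes>\<^sub>M lborel \<rightarrow>\<^sub>M PiM (insert j I) (\<lambda>_. lborel)"
    using measurable_add_dim[of j I "\<lambda>_. lborel"] by simp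
  from measurable_comp[OF this f]
  have "(\<lambda>(x, t). f (x(j := t))) \<in> borel_measurable (PiM I (\<lambda>_. lborel) \<Otimes>\<^sub>M lborel)"
    by (simp add: comp_def case_prod_unfold)
  then show ?thesis
    by (rule lborel.borel_measurable_nn_integral)
qed

lemma prekopa_leindler_section:
  fixes f :: "nat \<Rightarrow> ('a \<Rightarrow> real) \<Rightarrow> ennreal" and h :: "('a \<Rightarrow> real) \<Rightarrow> ennreal"
  assumes j: "j \<notin> I" and k: "k \<ge> 1"
    and f: "\<And>i. i < k \<Longrightarrow> f i \<in> borel_measurable (PiM (insert j I) (\<lambda>_. lborel))"
    and h: "h \<in> borel_measurable (PiM (insert j I) (\<lambda>_. lborel))"
    and fh: "\<And>x \<epsilon>. (\<And>i. i < k \<Longrightarrow> x i \<in> space (PiM (insert j I) (\<lambda>_. lborel))) \<Longrightarrow>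
        (\<And>l. l \<in> insert j I \<Longrightarrow> \<epsilon> l = 1 \<or> \<epsilon> l = -1) \<Longrightarrow>
        (\<Prod>i<k. f i (x i)) \<le> h (\<lambda>l\<in>insert j I. \<epsilon> l * (\<Prod>i<k. \<bar>x i l\<bar> powr (1 / k))) ^ k"
    and y: "\<And>i. i < k \<Longrightarrow> y i \<in> space (PiM I (\<lambda>_. lborel))"
    and \<epsilon>: "\<And>l. l \<in> I \<Longrightarrow> \<epsilon> l = 1 \<or> \<epsilon> l = -1"
  defines "z \<equiv> \<lambda>l\<in>I. \<epsilon> l * (\<Prod>i<k. \<bar>y i l\<bar> powr (1 / k))"
  shows "(\<Prod>i<k. \<integral>\<^sup>+t. f i ((y i)(j := t)) \<partial>lborel) \<le> (\<integral>\<^sup>+t. h (z(j := t)) \<partial>lborel) ^ k"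
proof (rule prekopa_leindler_real_signs[OF k])
  show "(\<lambda>t. f i ((y i)(j := t))) \<in> borel_measurable borel" if "i < k" for i
    using measurable_comp[OF measurable_component_update[OF y[OF that] j] f[OF that]]
    by (simp add: comp_def)
  have "z \<in> space (PiM I (\<lambda>_. lborel))" by (simp add: z_def space_PiM)
  from measurable_comp[OF measurable_component_update[OF this j] h]
  show "(\<lambda>t. h (z(j := t))) \<in> borel_measurable borel"
    by (simp add: comp_def)
next
  fix t :: "nat \<Rightarrow> real" and \<sigma> :: real assume \<sigma>: "\<sigma> = 1 \<or> \<sigma> = -1"
  have "(\<lambda>l\<in>insert j I. (\<epsilon>(j := \<sigma>)) l * (\<Prod>i<k. \<bar>((y i)(j := t i)) l\<bar> powr (1 / k)))
      = z(j := \<sigma> * (\<Prod>i<k. \<bar>t i\<bar> powr (1 / k)))"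
    using j by (auto simp: z_def fun_eq_iff)
  moreover have "(\<Prod>i<k. f i ((y i)(j := t i))) \<le>
      h (\<lambda>l\<in>insert j I. (\<epsilon>(j := \<sigma>)) l * (\<Prod>i<k. \<bar>((y i)(j := t i)) l\<bar> powr (1 / k))) ^ k"
    using y \<epsilon> \<sigma> by (intro fh) (auto simp: space_PiM PiE_def extensional_def)
  ultimately show "(\<Prod>i<k. f i ((y i)(j := t i))) \<le> h (z(j := \<sigma> * (\<Prod>i<k. \<bar>t i\<bar> powr (1 / k)))) ^ k"
    by simp
qed

lemma prekopa_leindler_PiM:
  fixes I :: "'a set" and f :: "nat \<Rightarrow> ('a \<Rightarrow> real) \<Rightarrow> ennreal" and h :: "('a \<Rightarrow> real) \<Rightarrow> ennreal"
  assumes I: "finite I" and k: "k \<ge> 1"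
    and f: "\<And>i. i < k \<Longrightarrow> f i \<in> borel_measurable (PiM I (\<lambda>_. lborel))"
    and h: "h \<in> borel_measurable (PiM I (\<lambda>_. lborel))"
    and fh: "\<And>x \<epsilon>. (\<And>i. i < k \<Longrightarrow> x i \<in> space (PiM I (\<lambda>_. lborel))) \<Longrightarrow> (\<And>j. j \<in> I \<Longrightarrow> \<epsilon> j = 1 \<or> \<epsilon> j = -1) \<Longrightarrow>
        (\<Prod>i<k. f i (x i)) \<le> h (\<lambda>j\<in>I. \<epsilon> j * (\<Prod>i<k. \<bar>x i j\<bar> powr (1 / k))) ^ k"
  shows "(\<Prod>i<k. \<integral>\<^sup>+y. f i y \<partial>PiM I (\<lambda>_. lborel)) \<le> (\<integral>\<^sup>+y. h y \<partial>PiM I (\<lambda>_. lborel)) ^ k"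
  using I f h fh
proof (induction I arbitrary: f h rule: finite_induct)
  case empty
  have "(\<Prod>i<k. f i (\<lambda>_. undefined)) \<le> h (\<lambda>_. undefined) ^ k"
    using empty.prems(3)[of "\<lambda>_ _. undefined" "\<lambda>_. 1"] by (simp add: PiM_empty restrict_def)
  then show ?case
    by (simp add: PiM_empty nn_integral_count_space_finite)
next
  case (insert j I)
  interpret product_sigma_finite "\<lambda>_. lborel :: real measure"
    by (simp add: product_sigma_finite_def lborel.sigma_finite_measure_axioms)
  define F where "F i x = (\<integral>\<^sup>+t. f i (x(j := t)) \<partial>lborel)" for i x
  define H where "H x = (\<integral>\<^sup>+t. h (x(j := t)) \<partial>lborel)" for x
  have "(\<Prod>i<k. \<integral>\<^sup>+y. F i y \<partial>PiM I (\<lambda>_. lborel)) \<le> (\<integral>\<^sup>+y. H y \<partial>PiM I (\<lambda>_. lborel)) ^ k"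
  proof (rule insert.IH)
    show "F i \<in> borel_measurable (PiM I (\<lambda>_. lborel))" if "i < k" for i
      unfolding F_def using insert.hyps(2) insert.prems(1)[OF that] by (rule borel_measurable_nn_integral_fiber)
    show "H \<in> borel_measurable (PiM I (\<lambda>_. lborel))"
      unfolding H_def using insert.hyps(2) insert.prems(2) by (rule borel_measurable_nn_integral_fiber)
    show "(\<Prod>i<k. F i (y i)) \<le> H (\<lambda>l\<in>I. \<epsilon> l * (\<Prod>i<k. \<bar>y i l\<bar> powr (1 / k))) ^ k"
      if "\<And>i. i < k \<Longrightarrow> y i \<in> space (PiM I (\<lambda>_. lborel))" "\<And>l. l \<in> I \<Longrightarrow> \<epsilon> l = 1 \<or> \<epsilon> l = -1"
      for y \<epsilon>
      unfolding F_def H_def using insert.hyps(2) k insert.prems that by (rule prekopa_leindler_section)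
  qed
  then show ?case
    using insert.hyps insert.prems(1,2)
    by (simp add: F_def H_def product_nn_integral_insert)
qed

lemma cart_sum_Basis_component:
  fixes g :: "real ^ 'n \<Rightarrow> real"
  shows "(\<Sum>b\<in>Basis. g b *\<^sub>R b) $ j = g (axis j 1)"
proof -
  have "(\<Sum>b\<in>Basis. g b *\<^sub>R b) $ j = (\<Sum>b\<in>Basis. g b * (b \<bullet> axis j 1))"
    by (simp add: cart_eq_inner_axis inner_sum_left)
  also have "\<dots> = (\<Sum>b\<in>Basis. if b = axis j 1 then g b else 0)"
    by (intro sum.cong refl) (auto simp: inner_Basis)
  also have "\<dots> = g (axis j 1)" by simp
  finally show ?thesis .
qed

lemma prekopa_leindler_cart:
  fixes f :: "nat \<Rightarrow> real ^ 'n \<Rightarrow> ennreal" and h :: "real ^ 'n \<Rightarrow> ennreal"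
  assumes k: "k \<ge> 1"
    and [measurable]: "\<And>i. i < k \<Longrightarrow> f i \<in> borel_measurable borel" "h \<in> borel_measurable borel"
    and fh: "\<And>x \<epsilon>. (\<And>j. \<epsilon> j = 1 \<or> \<epsilon> j = -1) \<Longrightarrow>
        (\<Prod>i<k. f i (x i)) \<le> h (\<chi> j. \<epsilon> j * (\<Prod>i<k. \<bar>x i $ j\<bar> powr (1 / k))) ^ k"
  shows "(\<Prod>i<k. \<integral>\<^sup>+y. f i y \<partial>lborel) \<le> (\<integral>\<^sup>+y. h y \<partial>lborel) ^ k"
proof -
  define \<phi> where "\<phi> g = (\<Sum>b\<in>Basis. g b *\<^sub>R b)" for g :: "real ^ 'n \<Rightarrow> real"
  have [measurable]: "\<phi> \<in> PiM Basis (\<lambda>_. lborel) \<rightarrow>\<^sub>M borel"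
    unfolding \<phi>_def by measurable
  have integral_eq: "(\<integral>\<^sup>+y. u y \<partial>lborel) = (\<integral>\<^sup>+g. u (\<phi> g) \<partial>PiM Basis (\<lambda>_. lborel))"
    if [measurable]: "u \<in> borel_measurable borel" for u :: "real ^ 'n \<Rightarrow> ennreal"
    unfolding lborel_eq[where 'a = "real ^ 'n"] \<phi>_def[symmetric] by (simp add: nn_integral_distr)
  have "(\<Prod>i<k. \<integral>\<^sup>+g. f i (\<phi> g) \<partial>PiM Basis (\<lambda>_. lborel)) \<le> (\<integral>\<^sup>+g. h (\<phi> g) \<partial>PiM Basis (\<lambda>_. lborel)) ^ k"
  proof (rule prekopa_leindler_PiM[OF finite_Basis k])
    fix x :: "nat \<Rightarrow> real ^ 'n \<Rightarrow> real" and \<epsilon> :: "real ^ 'n \<Rightarrow> real"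
    assume \<epsilon>: "\<And>j. j \<in> Basis \<Longrightarrow> \<epsilon> j = 1 \<or> \<epsilon> j = -1"
    have "\<phi> (\<lambda>b\<in>Basis. \<epsilon> b * (\<Prod>i<k. \<bar>x i b\<bar> powr (1 / k)))
        = (\<chi> j. \<epsilon> (axis j 1) * (\<Prod>i<k. \<bar>\<phi> (x i) $ j\<bar> powr (1 / k)))"
      unfolding vec_eq_iff \<phi>_def cart_sum_Basis_component by simp
    moreover have "\<epsilon> (axis j 1) = 1 \<or> \<epsilon> (axis j 1) = -1" for j
      using \<epsilon> by simp
    ultimately show "(\<Prod>i<k. f i (\<phi> (x i))) \<le> h (\<phi> (\<lambda>b\<in>Basis. \<epsilon> b * (\<Prod>i<k. \<bar>x i b\<bar> powr (1 / k)))) ^ k"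
      by (simp add: fh)
  qed auto
  then show ?thesis
    by (simp add: integral_eq)
qed

section \<open>Radial functions and the volume inequality\<close>

lemma radial_fun_ge:
  fixes K :: "'a::real_normed_vector set"
  assumes "bounded K" "u \<noteq> 0" "t \<ge> 0" "t *\<^sub>R u \<in> K"
  shows "t \<le> radial_fun K u"
proof -
  obtain B where B: "\<And>x. x \<in> K \<Longrightarrow> norm x \<le> B" using assms(1) by (auto simp: bounded_iff)
  have "bdd_above {t. t \<ge> 0 \<and> t *\<^sub>R u \<in> K}"
  proof (rule bdd_aboveI)
    fix s assume "s \<in> {t. t \<ge> 0 \<and> t *\<^sub>R u \<in> K}"
    then have "s * norm u \<le> B" using B[of "s *\<^sub>R u"] by simp
    then show "s \<le> B / norm u" using assms(2) by (simp add: field_simps)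
  qed
  then show ?thesis
    unfolding radial_fun_def using assms(3,4) by (intro cSup_upper) auto
qed

lemma sum_sq_geometric_mean_scaleR:
  fixes u :: "nat \<Rightarrow> real ^ 'n" and r :: "nat \<Rightarrow> real"
  assumes "\<And>i. i < k \<Longrightarrow> 0 \<le> r i"
  shows "(\<Sum>j\<in>UNIV. (\<Prod>i<k. \<bar>(r i *\<^sub>R u i) $ j\<bar> powr (1 / k)) ^ 2)
    = (\<Prod>i<k. r i) powr (2 / k) * (\<Sum>j\<in>UNIV. (\<Prod>i<k. \<bar>u i $ j\<bar> powr (1 / k)) ^ 2)"
proof -
  have "(\<Prod>i<k. \<bar>(r i *\<^sub>R u i) $ j\<bar> powr (1 / k)) = (\<Prod>i<k. r i) powr (1 / k) * (\<Prod>i<k. \<bar>u i $ j\<bar> powr (1 / k))"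
    for j using assms by (simp add: abs_mult powr_mult prod.distrib prod_powr_distrib)
  moreover have "(\<Prod>i<k. r i) \<ge> 0" using assms by (intro prod_nonneg) auto
  ultimately show ?thesis
    by (simp add: power_mult_distrib sum_distrib_left powr_powr flip: powr_realpow' powr_mult)
qed

lemma sum_sq_geometric_mean_le_one:
  fixes K :: "nat \<Rightarrow> (real ^ 'n) set" and v :: "nat \<Rightarrow> real ^ 'n"
  assumes k: "k \<ge> 1" and K: "\<And>i. i < k \<Longrightarrow> bounded (K i)"
    and radial: "\<And>x :: nat \<Rightarrow> real ^ 'n. (\<forall>i<k. x i \<in> sphere 0 1) \<Longrightarrow>
           (let D = (\<Sum>j\<in>UNIV. (\<Prod>i<k. \<bar>x i $ j\<bar> powr (1 / real k)) ^ 2) powr (real k / 2)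
            in D \<noteq> 0 \<longrightarrow> (\<Prod>i<k. radial_fun (K i) (x i)) \<le> 1 / D)"
    and v: "\<And>i. i < k \<Longrightarrow> v i \<in> K i"
  shows "(\<Sum>j\<in>UNIV. (\<Prod>i<k. \<bar>v i $ j\<bar> powr (1 / k)) ^ 2) \<le> 1"
proof (cases "\<exists>i<k. v i = 0")
  case True
  then have zero: "(\<Prod>i<k. \<bar>v i $ j\<bar> powr (1 / k)) = 0" for j
    by (auto intro!: prod_zero bexI)
  show ?thesis unfolding zero by simp
next
  case False
  define G where "G x = (\<Sum>j\<in>UNIV. (\<Prod>i<k. \<bar>x i $ j\<bar> powr (1 / k)) ^ 2)" for x :: "nat \<Rightarrow> real ^ 'n"
  define r where "r i = norm (v i)" for i
  define u where "u i = v i /\<^sub>R r i" for i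
  define \<rho> where "\<rho> = (\<Prod>i<k. r i)"
  have r: "0 < r i" "r i *\<^sub>R u i = v i" "u i \<in> sphere 0 1" if "i < k" for i
    using False that by (auto simp: r_def u_def)
  have "\<rho> \<ge> 0" unfolding \<rho>_def using r by (intro prod_nonneg) (auto intro: less_imp_le)
  have "G v = G (\<lambda>i. r i *\<^sub>R u i)"
    unfolding G_def using r by (intro sum.cong prod.cong refl arg_cong2[where f = "(^)"]) auto
  also have "\<dots> = \<rho> powr (2 / k) * G u"
    unfolding G_def \<rho>_def using r by (intro sum_sq_geometric_mean_scaleR) (auto intro: less_imp_le)
  finally have G_v: "G v = \<rho> powr (2 / k) * G u" .
  show ?thesis
  proof (cases "G u = 0")
    case True
    then show ?thesis using G_v by (simp add: G_def)
  next
    case False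
    then have "G u > 0" by (simp add: G_def less_le sum_nonneg)
    define D where "D = G u powr (k / 2)"
    have "D > 0" using \<open>G u > 0\<close> by (simp add: D_def)
    have "\<rho> \<le> (\<Prod>i<k. radial_fun (K i) (u i))"
      unfolding \<rho>_def
    proof (rule prod_mono)
      fix i assume "i \<in> {..<k}"
      then show "0 \<le> r i \<and> r i \<le> radial_fun (K i) (u i)"
        using r[of i] K[of i] v[of i] radial_fun_ge[of "K i" "u i" "r i"] by force
    qed
    also have "\<dots> \<le> 1 / D"
      using radial[of u] r \<open>D > 0\<close> by (simp add: Let_def D_def G_def)
    finally have "\<rho> * D \<le> 1"
      using \<open>D > 0\<close> by (simp add: field_simps)
    then have "(\<rho> * D) powr (2 / k) \<le> 1"
      using \<open>\<rho> \<ge> 0\<close> \<open>D > 0\<close> by (simp add: powr_le1)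
    moreover have "(\<rho> * D) powr (2 / k) = G v"
      using G_v \<open>\<rho> \<ge> 0\<close> \<open>D > 0\<close> \<open>G u > 0\<close> k by (simp add: powr_mult D_def powr_powr)
    ultimately show ?thesis by (simp add: G_def)
  qed
qed

lemma signed_vector_in_cball:
  fixes a \<epsilon> :: "'n::finite \<Rightarrow> real"
  assumes "\<And>j. \<epsilon> j = 1 \<or> \<epsilon> j = -1" "(\<Sum>j\<in>UNIV. (a j)\<^sup>2) \<le> 1"
  shows "(\<chi> j. \<epsilon> j * a j) \<in> cball (0 :: real ^ 'n) 1"
proof -
  have "((\<chi> j. \<epsilon> j * a j) $ j)\<^sup>2 = (a j)\<^sup>2" for j
    using assms(1)[of j] by (auto simp: power_mult_distrib)
  then show ?thesis
    using assms(2) by (simp add: norm_vec_def L2_set_def)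
qed

lemma prod_indicator_le_indicator_cball:
  fixes K :: "nat \<Rightarrow> (real ^ 'n) set" and x :: "nat \<Rightarrow> real ^ 'n"
  assumes k: "k \<ge> 1" and K: "\<And>i. i < k \<Longrightarrow> bounded (K i)"
    and radial: "\<And>x :: nat \<Rightarrow> real ^ 'n. (\<forall>i<k. x i \<in> sphere 0 1) \<Longrightarrow>
           (let D = (\<Sum>j\<in>UNIV. (\<Prod>i<k. \<bar>x i $ j\<bar> powr (1 / real k)) ^ 2) powr (real k / 2)
            in D \<noteq> 0 \<longrightarrow> (\<Prod>i<k. radial_fun (K i) (x i)) \<le> 1 / D)"
    and \<epsilon>: "\<And>j. \<epsilon> j = 1 \<or> \<epsilon> j = -1"
  shows "(\<Prod>i<k. indicator (K i) (x i) :: ennreal)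
    \<le> indicator (cball 0 1) (\<chi> j. \<epsilon> j * (\<Prod>i<k. \<bar>x i $ j\<bar> powr (1 / k))) ^ k"
proof (cases "\<forall>i<k. x i \<in> K i")
  case True
  then have "(\<chi> j. \<epsilon> j * (\<Prod>i<k. \<bar>x i $ j\<bar> powr (1 / k))) \<in> cball 0 1"
    using \<epsilon> K by (intro signed_vector_in_cball sum_sq_geometric_mean_le_one[OF k _ radial]) auto
  then show ?thesis using True by simp
next
  case False
  then obtain i where "i < k" "x i \<notin> K i" by blast
  then have "(\<Prod>i<k. indicator (K i) (x i) :: ennreal) = 0"
    by (intro prod_zero bexI[of _ i]) auto
  then show ?thesis by (simp only: zero_le)
qed

lemma emeasure_lborel_compact_eq_measure_lebesgue:
  fixes S :: "'a::euclidean_space set"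
  assumes "compact S"
  shows "emeasure lborel S = ennreal (measure lebesgue S)"
proof -
  have "S \<in> sets lborel" using assms by (simp add: borel_compact)
  moreover have "emeasure lborel S \<noteq> \<infinity>"
    using emeasure_bounded_finite[OF compact_imp_bounded[OF assms]] by simp
  ultimately show ?thesis
    by (simp add: emeasure_eq_ennreal_measure)
qed

theorem mainTheorem9:
  fixes k :: nat and K :: "nat \<Rightarrow> (real ^ 'n) set"
  assumes "k \<ge> 2"
    and "\<And>i. i < k \<Longrightarrow> convex_body (K i)"
    and "\<And>i. i < k \<Longrightarrow> unconditional (K i)"
    and "\<And>i. i < k \<Longrightarrow> interior (K i) \<noteq> {}"
    and "\<And>x :: nat \<Rightarrow> real ^ 'n. (\<forall>i<k. x i \<in> sphere 0 1) \<Longrightarrow>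
           (let D = (\<Sum>j\<in>UNIV. (\<Prod>i<k. \<bar>x i $ j\<bar> powr (1 / real k)) ^ 2) powr (real k / 2)
            in D \<noteq> 0 \<longrightarrow> (\<Prod>i<k. radial_fun (K i) (x i)) \<le> 1 / D)"
  shows "(\<Prod>i<k. measure lebesgue (K i)) \<le> (measure lebesgue (cball (0 :: real ^ 'n) 1)) ^ k"
proof -
  have k: "k \<ge> 1" using assms(1) by simp
  have K: "compact (K i)" if "i < k" for i
    using assms(2)[OF that] by (simp add: convex_body_def)
  have "(\<Prod>i<k. \<integral>\<^sup>+y. indicator (K i) y \<partial>lborel) \<le> (\<integral>\<^sup>+y. indicator (cball (0 :: real ^ 'n) 1) y \<partial>lborel) ^ k"
    using K assms(5)
    by (intro prekopa_leindler_cart[OF k] prod_indicator_le_indicator_cball[OF k])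
      (auto intro: compact_imp_bounded borel_compact borel_measurable_indicator)
  then have "(\<Prod>i<k. emeasure lborel (K i)) \<le> emeasure lborel (cball (0 :: real ^ 'n) 1) ^ k"
    using K by (simp add: borel_compact)
  then have "ennreal (\<Prod>i<k. measure lebesgue (K i)) \<le> ennreal (measure lebesgue (cball (0 :: real ^ 'n) 1) ^ k)"
    using K by (simp add: emeasure_lborel_compact_eq_measure_lebesgue prod_ennreal ennreal_power)
  then show ?thesis
    by (simp add: ennreal_le_iff)
qed

end
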